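(* Let $(G;+,\cdot)$ be a finite field of order $q$. Then the class of affine functions of arity at least $\max(q,3)+1$ over $(G;+,\cdot)$ is reconstructible: for every $n \geq \max(q,3)+1$, every affine $f\colon G^n\to G$ and every function $g \colon G^n \to G$ (not assumed affine) with $\operatorname{deck} g = \operatorname{deck} f$, we have $g \equiv f$.
   Context: A function $f\colon G^n\to G$ is affine if $f(x_1,\dots,x_n) = a_1x_1+\dots+a_nx_n+c$ for some $a_i,c\in G$. Identification minor: for $f\colon A^n\to B$ and $I=\{i,j\}$, $i<j$, $f_I\colon A^{n-1}\to B$ is $f_I(x_1,\dots,x_{n-1}) = f(x_1,\dots,x_{j-1},x_i,x_j,\dots,x_{n-1})$. Two functions $f,g\colon A^n\to B$ are equivalent, $f\equiv g$, if $f(x_1,\dots,x_n) = g(x_{\sigma(1)},\dots,x_{\sigma(n)})$ for some permutation $\sigma$ of $\{1,\dots,n\}$. The deck of $f$ is the multiset $\langle f_I/{\equiv} : I\rangle$ of equivalence classes of all $\binom n2$ identification minors of $f$. *)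

theory Defs
  imports Main "HOL-Library.Multiset" "HOL-Combinatorics.Permutations"
begin

text \<open>An n-ary function A^n -> B is modelled as a function on lists; only its values
  on lists of length n are relevant. Argument positions are 0-indexed.\<close>

definition affine_fun :: "nat \<Rightarrow> ('a::field list \<Rightarrow> 'a) \<Rightarrow> bool" where
  "affine_fun n f \<longleftrightarrow> (\<exists>a c. \<forall>xs. length xs = n \<longrightarrow> f xs = (\<Sum>i<n. a i * xs ! i) + c)"

text \<open>Identification minor f_I for I = {i,j}, i < j (0-indexed): the new argument list
  of length n-1 is x_0..x_{j-1}, then x_i inserted at position j, then x_j..x_{n-2}.\<close>
definition id_minor :: "('a list \<Rightarrow> 'b) \<Rightarrow> nat \<Rightarrow> nat \<Rightarrow> 'a list \<Rightarrow> 'b" where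
  "id_minor f i j xs = f (take j xs @ [xs ! i] @ drop j xs)"

definition fun_equiv :: "nat \<Rightarrow> ('a list \<Rightarrow> 'b) \<Rightarrow> ('a list \<Rightarrow> 'b) \<Rightarrow> bool" where
  "fun_equiv n f g \<longleftrightarrow> (\<exists>\<sigma>. \<sigma> permutes {..<n} \<and>
     (\<forall>xs. length xs = n \<longrightarrow> f xs = g (map (\<lambda>k. xs ! \<sigma> k) [0..<n])))"

definition equiv_class :: "nat \<Rightarrow> ('a list \<Rightarrow> 'b) \<Rightarrow> ('a list \<Rightarrow> 'b) set" where
  "equiv_class n f = {h. fun_equiv n h f}"

definition deck :: "nat \<Rightarrow> ('a list \<Rightarrow> 'b) \<Rightarrow> ('a list \<Rightarrow> 'b) set multiset" where
  "deck n f = image_mset (\<lambda>(i, j). equiv_class (n - 1) (id_minor f i j))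
      (mset_set {(i, j). i < j \<and> j < n})"

end

theory Submission
  imports Defs
begin

text \<open>The cards of the deck of \<open>g\<close> are equivalent to minors of the affine function \<open>f\<close>, so all
  identification minors of \<open>g\<close> are affine. As \<open>n > |G|\<close>, every argument tuple has two equal
  entries, i.e. lies on a diagonal where \<open>g\<close> agrees with an affine minor; for \<open>n \<ge> 4\<close> these
  local descriptions fit together and \<open>g\<close> is affine, with the constant term of \<open>f\<close>.

  An affine function is determined up to equivalence by the multiset of its coefficients, and the
  deck determines the multiset of the coefficient multisets of the minors, each obtained by merging
  two coefficients \<open>b i\<close>, \<open>b j\<close> into \<open>b i + b j\<close>. Counting how often a value \<open>v\<close> occurs over
  the whole deck shows that, for the numbers \<open>\<alpha> v\<close> of coefficients equal to \<open>v\<close>, the quantity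
  \<open>(n - 1)(n - 2) \<alpha> v + (\<Sum>u. \<alpha> u \<alpha> (v - u)) - (\<Sum>u | u + u = v. \<alpha> u)\<close> is determined by the
  deck. For \<open>n \<ge> 5\<close> the linear term dominates in \<open>\<ell>\<^sub>1\<close>, so \<open>\<alpha>\<close> is determined; for \<open>n = 4\<close>,
  where \<open>|G| \<in> {2, 3}\<close>, the equations are solved by hand.\<close>

section \<open>Affine functions and their minors\<close>

definition indicator_list :: "nat \<Rightarrow> nat set \<Rightarrow> 'a::zero_neq_one list" where
  "indicator_list N S = map (\<lambda>t. of_bool (t \<in> S)) [0..<N]"

lemma length_indicator_list [simp]: "length (indicator_list N S) = N"
  by (simp add: indicator_list_def)

lemma nth_indicator_list [simp]: "t < N \<Longrightarrow> indicator_list N S ! t = of_bool (t \<in> S)"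
  by (simp add: indicator_list_def)

lemma indicator_list_empty: "indicator_list N {} = replicate N 0"
  by (simp add: indicator_list_def map_replicate_const)

lemma sum_mult_indicator_list:
  fixes w :: "nat \<Rightarrow> 'a::semiring_1"
  assumes "S \<subseteq> {..<N}"
  shows "(\<Sum>t<N. w t * indicator_list N S ! t) = sum w S"
proof -
  have "(\<Sum>t<N. w t * indicator_list N S ! t) = (\<Sum>t<N. if t \<in> S then w t else 0)"
    by (rule sum.cong) auto
  also have "\<dots> = sum w ({..<N} \<inter> S)"
    by (simp add: sum.inter_restrict)
  also have "{..<N} \<inter> S = S"
    using assms by auto
  finally show ?thesis .
qed

lemma sum_regroup:
  fixes a y :: "nat \<Rightarrow> 'a::semiring_0" and r :: "nat \<Rightarrow> nat"
  assumes "\<And>k. k < n \<Longrightarrow> r k < m"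
  shows "(\<Sum>k<n. a k * y (r k)) = (\<Sum>t<m. (\<Sum>k | k < n \<and> r k = t. a k) * y t)"
proof -
  have "(\<Sum>k<n. a k * y (r k)) = (\<Sum>t<m. \<Sum>k | k \<in> {..<n} \<and> r k = t. a k * y (r k))"
    by (rule sum.group[symmetric]) (use assms in auto)
  also have "\<dots> = (\<Sum>t<m. (\<Sum>k | k < n \<and> r k = t. a k) * y t)"
    by (auto simp: sum_distrib_right intro!: sum.cong)
  finally show ?thesis .
qed

lemma affine_fun_reindexed:
  fixes h :: "'a::field list \<Rightarrow> 'a" and a :: "nat \<Rightarrow> 'a" and r :: "nat \<Rightarrow> nat"
  assumes "\<And>k. k < n \<Longrightarrow> r k < m"
    and "\<And>ys. length ys = m \<Longrightarrow> h ys = (\<Sum>k<n. a k * ys ! r k) + c"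
  shows "affine_fun m h"
  unfolding affine_fun_def
proof (intro exI allI impI)
  fix xs :: "'a list"
  assume "length xs = m"
  then show "h xs = (\<Sum>t<m. (\<Sum>k | k < n \<and> r k = t. a k) * xs ! t) + c"
    using assms(2) sum_regroup[OF assms(1), where a = a and y = "(!) xs"] by simp
qed

text \<open>Argument \<open>t\<close> of \<open>f\<close> is fed with argument \<open>minor_index i j t\<close> of \<open>id_minor f i j\<close>.\<close>

definition minor_index :: "nat \<Rightarrow> nat \<Rightarrow> nat \<Rightarrow> nat" where
  "minor_index i j t = (if t < j then t else if t = j then i else t - 1)"

lemma minor_index_less: "t < n \<Longrightarrow> i < j \<Longrightarrow> j < n \<Longrightarrow> minor_index i j t < n - 1"
  by (auto simp: minor_index_def)

lemma id_minor_eq_map_minor_index: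
  assumes "length ys = n - 1" "i < j" "j < n"
  shows "id_minor f i j ys = f (map (\<lambda>t. ys ! minor_index i j t) [0..<n])"
  unfolding id_minor_def
proof (rule arg_cong[of _ _ f], rule nth_equalityI)
  fix t
  assume "t < length (take j ys @ [ys ! i] @ drop j ys)"
  then show "(take j ys @ [ys ! i] @ drop j ys) ! t = map (\<lambda>t. ys ! minor_index i j t) [0..<n] ! t"
    using assms by (auto simp: nth_append minor_index_def min_def)
qed (use assms in auto)

lemma id_minor_linear_form:
  assumes "\<And>xs. length xs = n \<Longrightarrow> f xs = (\<Sum>k<n. a k * xs ! k) + c"
    and "i < j" "j < n" "length ys = n - 1"
  shows "id_minor f i j ys = (\<Sum>t<n. a t * ys ! minor_index i j t) + c"
  using assms by (simp add: id_minor_eq_map_minor_index)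

lemma affine_fun_id_minor:
  assumes "affine_fun n f" "i < j" "j < n"
  shows "affine_fun (n - 1) (id_minor f i j)"
proof -
  obtain a c where f: "\<And>xs. length xs = n \<Longrightarrow> f xs = (\<Sum>k<n. a k * xs ! k) + c"
    using assms(1) unfolding affine_fun_def by blast
  show ?thesis
  proof (rule affine_fun_reindexed)
    show "minor_index i j t < n - 1" if "t < n" for t
      using that assms(2,3) by (rule minor_index_less)
    show "id_minor f i j ys = (\<Sum>t<n. a t * ys ! minor_index i j t) + c" if "length ys = n - 1" for ys
      using f assms(2,3) that by (rule id_minor_linear_form)
  qed
qed

lemma id_minor_replicate:
  assumes "i < j" "j < n"
  shows "id_minor f i j (replicate (n - 1) x) = f (replicate n x)"
proof -
  have "take j (replicate (n - 1) x) @ [x] @ drop j (replicate (n - 1) x) = replicate n x"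
    using assms by (intro replicate_eqI) (auto dest: in_set_takeD in_set_dropD)
  then show ?thesis
    using assms by (simp add: id_minor_def)
qed

lemma fun_equiv_refl: "fun_equiv N h h"
  unfolding fun_equiv_def
  by (rule exI[of _ id]) (auto simp: map_nth)

lemma affine_fun_fun_equiv:
  assumes "fun_equiv N h h'" "affine_fun N h'"
  shows "affine_fun N h"
proof -
  obtain \<sigma> where \<sigma>: "\<sigma> permutes {..<N}"
    and h: "\<And>xs. length xs = N \<Longrightarrow> h xs = h' (map (\<lambda>k. xs ! \<sigma> k) [0..<N])"
    using assms(1) unfolding fun_equiv_def by blast
  obtain a c where h': "\<And>ys. length ys = N \<Longrightarrow> h' ys = (\<Sum>k<N. a k * ys ! k) + c"
    using assms(2) unfolding affine_fun_def by blast
  show ?thesis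
  proof (rule affine_fun_reindexed)
    show "\<sigma> k < N" if "k < N" for k
      using permutes_in_image[OF \<sigma>, of k] that by simp
    show "h ys = (\<Sum>k<N. a k * ys ! \<sigma> k) + c" if "length ys = N" for ys
      using that h h' by simp
  qed
qed

lemma fun_equiv_replicate:
  assumes "fun_equiv N h h'"
  shows "h (replicate N x) = h' (replicate N x)"
proof -
  obtain \<sigma> where \<sigma>: "\<sigma> permutes {..<N}"
    and "\<And>xs. length xs = N \<Longrightarrow> h xs = h' (map (\<lambda>k. xs ! \<sigma> k) [0..<N])"
    using assms unfolding fun_equiv_def by blast
  moreover have "map (\<lambda>k. replicate N x ! \<sigma> k) [0..<N] = replicate N x"
    using permutes_in_image[OF \<sigma>] by (intro nth_equalityI) auto
  ultimately show ?thesis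
    by simp
qed

definition increasing_pairs :: "nat \<Rightarrow> (nat \<times> nat) set" where
  "increasing_pairs n = {(i, j). i < j \<and> j < n}"

lemma finite_increasing_pairs [simp]: "finite (increasing_pairs n)"
  by (rule finite_subset[of _ "{..<n} \<times> {..<n}"]) (auto simp: increasing_pairs_def)

lemma deck_eq_imp_minor_equiv:
  assumes "deck n g = deck n f" "i < j" "j < n"
  obtains k l where "k < l" "l < n" "fun_equiv (n - 1) (id_minor g i j) (id_minor f k l)"
proof -
  have "(i, j) \<in># mset_set {(i, j). i < j \<and> j < n}"
    using assms(2,3) finite_increasing_pairs[of n] by (simp add: increasing_pairs_def)
  then have "equiv_class (n - 1) (id_minor g i j) \<in># deck n g"
    unfolding deck_def by force
  then have "equiv_class (n - 1) (id_minor g i j) \<in># deck n f"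
    using assms(1) by simp
  then obtain k l where kl: "k < l" "l < n"
    and eq: "equiv_class (n - 1) (id_minor g i j) = equiv_class (n - 1) (id_minor f k l)"
    using finite_increasing_pairs[of n] unfolding deck_def increasing_pairs_def by auto
  have "id_minor g i j \<in> equiv_class (n - 1) (id_minor g i j)"
    by (simp add: equiv_class_def fun_equiv_refl)
  then have "id_minor g i j \<in> equiv_class (n - 1) (id_minor f k l)"
    by (simp only: eq)
  then have "fun_equiv (n - 1) (id_minor g i j) (id_minor f k l)"
    by (simp add: equiv_class_def)
  with kl show thesis
    by (rule that)
qed

lemma deck_eq_imp_affine_minors:
  assumes "affine_fun n f" "deck n g = deck n f" "i < j" "j < n"
  shows "affine_fun (n - 1) (id_minor g i j)"
proof -
  obtain k l where "k < l" "l < n" and equiv: "fun_equiv (n - 1) (id_minor g i j) (id_minor f k l)"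
    using deck_eq_imp_minor_equiv[OF assms(2-4)] .
  then show ?thesis
    by (intro affine_fun_fun_equiv[OF equiv] affine_fun_id_minor[OF assms(1)])
qed

lemma deck_eq_imp_replicate_eq:
  assumes "deck n g = deck n f" "2 \<le> n"
  shows "g (replicate n x) = f (replicate n x)"
proof -
  have "(0::nat) < 1" "1 < n"
    using assms(2) by auto
  moreover obtain k l where "k < l" "l < n" "fun_equiv (n - 1) (id_minor g 0 1) (id_minor f k l)"
    using deck_eq_imp_minor_equiv[OF assms(1) \<open>0 < 1\<close> \<open>1 < n\<close>] .
  ultimately show ?thesis
    by (metis fun_equiv_replicate id_minor_replicate)
qed

section \<open>Functions all of whose minors are affine\<close>

definition del_nth :: "nat \<Rightarrow> 'a list \<Rightarrow> 'a list" where
  "del_nth l xs = take l xs @ drop (Suc l) xs"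

lemma length_del_nth: "l < length xs \<Longrightarrow> length (del_nth l xs) = length xs - 1"
  by (simp add: del_nth_def)

lemma nth_del_nth:
  "l < length xs \<Longrightarrow> m < length xs - 1 \<Longrightarrow> del_nth l xs ! m = xs ! (if m < l then m else Suc m)"
  by (auto simp: del_nth_def nth_append min_def)

lemma id_minor_del_nth:
  assumes "k < l" "l < length xs" "xs ! k = xs ! l"
  shows "id_minor g k l (del_nth l xs) = g xs"
proof -
  have "take l (del_nth l xs) @ [del_nth l xs ! k] @ drop l (del_nth l xs) = xs"
    using assms by (simp add: del_nth_def nth_append id_take_nth_drop[symmetric])
  then show ?thesis
    unfolding id_minor_def by simp
qed

text \<open>On the diagonal \<open>x\<^sub>k = x\<^sub>l\<close> the function \<open>g\<close> is the affine minor \<open>id_minor g k l\<close>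
  evaluated at \<open>del_nth l x\<close>.\<close>

lemma affine_on_diagonal:
  fixes g :: "'a::field list \<Rightarrow> 'a"
  assumes "affine_fun (n - 1) (id_minor g k l)" "k < l" "l < n"
  obtains w where "\<And>x. length x = n \<Longrightarrow> x ! k = x ! l \<Longrightarrow>
    g x = (\<Sum>t<n. w t * x ! t) + g (replicate n 0)"
proof -
  obtain \<beta> \<gamma> where \<beta>: "\<And>ys. length ys = n - 1 \<Longrightarrow> id_minor g k l ys = (\<Sum>m<n - 1. \<beta> m * ys ! m) + \<gamma>"
    using assms(1) unfolding affine_fun_def by blast
  define s where "s m = (if m < l then m else Suc m)" for m
  define w where "w t = (\<Sum>m | m < n - 1 \<and> s m = t. \<beta> m)" for t
  have form: "g x = (\<Sum>t<n. w t * x ! t) + \<gamma>" if x: "length x = n" "x ! k = x ! l" for x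
  proof -
    have "g x = (\<Sum>m<n - 1. \<beta> m * del_nth l x ! m) + \<gamma>"
      using assms x \<beta>[of "del_nth l x"] by (simp add: id_minor_del_nth length_del_nth)
    also have "(\<Sum>m<n - 1. \<beta> m * del_nth l x ! m) = (\<Sum>m<n - 1. \<beta> m * x ! s m)"
      using assms x by (auto simp: nth_del_nth s_def intro!: sum.cong)
    also have "\<dots> = (\<Sum>t<n. w t * x ! t)"
      unfolding w_def by (rule sum_regroup) (auto simp: s_def)
    finally show ?thesis .
  qed
  moreover have "\<gamma> = g (replicate n 0)"
    using form[of "replicate n 0"] assms by simp
  ultimately show thesis
    using that by blast
qed

lemma sum_split_pair:
  fixes F :: "nat \<Rightarrow> 'a::comm_monoid_add"
  assumes "k \<noteq> l" "k < n" "l < n"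
  shows "(\<Sum>t<n. F t) = (\<Sum>t\<in>{..<n} - {k, l}. F t) + F k + F l"
proof -
  have "(\<Sum>t<n. F t) = (\<Sum>t\<in>{..<n} - {k, l}. F t) + sum F {k, l}"
    by (rule sum.subset_diff) (use assms in auto)
  then show ?thesis
    using assms by (simp add: add.assoc)
qed

text \<open>On the diagonal only \<open>w k + w l\<close> is determined by \<open>g\<close>; all coefficients are read off
  from values of \<open>g\<close> at 0/1 vectors lying on the diagonal.\<close>

lemma diagonal_form:
  fixes g :: "'a::field list \<Rightarrow> 'a"
  assumes "affine_fun (n - 1) (id_minor g k l)" "k < l" "l < n"
    and x: "length x = n" "x ! k = x ! l"
  shows "g x = (\<Sum>t\<in>{..<n} - {k, l}. (g (indicator_list n {t}) - g (replicate n 0)) * x ! t)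
    + (g (indicator_list n {k, l}) - g (replicate n 0)) * x ! k + g (replicate n 0)"
proof -
  obtain w where w: "\<And>x. length x = n \<Longrightarrow> x ! k = x ! l \<Longrightarrow>
      g x = (\<Sum>t<n. w t * x ! t) + g (replicate n 0)"
    using affine_on_diagonal[OF assms(1-3)] by blast
  have w_at: "g (indicator_list n S) = sum w S + g (replicate n 0)"
    if "S \<subseteq> {..<n}" "k \<in> S \<longleftrightarrow> l \<in> S" for S
    using that assms(2,3) w[of "indicator_list n S"] by (simp add: sum_mult_indicator_list Int_absorb1)
  have "g x = (\<Sum>t\<in>{..<n} - {k, l}. w t * x ! t) + (w k * x ! k + w l * x ! l) + g (replicate n 0)"
    using w[OF x] assms(2,3) sum_split_pair[of k l n] by (simp add: add.assoc)
  also have "(\<Sum>t\<in>{..<n} - {k, l}. w t * x ! t)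
      = (\<Sum>t\<in>{..<n} - {k, l}. (g (indicator_list n {t}) - g (replicate n 0)) * x ! t)"
    using w_at by (intro sum.cong) auto
  also have "w k * x ! k + w l * x ! l = (g (indicator_list n {k, l}) - g (replicate n 0)) * x ! k"
    using w_at[of "{k, l}"] assms(2,3) x(2) by (simp add: distrib_right)
  finally show ?thesis
    by (simp add: add.assoc)
qed

lemma nth_eq_if_card_less_length:
  fixes xs :: "'a::finite list"
  assumes "card (UNIV :: 'a set) < length xs"
  obtains k l where "k < l" "l < length xs" "xs ! k = xs ! l"
proof -
  have "\<not> distinct xs"
    using assms card_mono[of UNIV "set xs"] by (auto simp: distinct_card)
  then show thesis
    using that by (metis distinct_conv_nth linorder_neqE_nat)
qed

lemma obtain_pair_avoiding:
  fixes n k l :: nat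
  assumes "4 \<le> n"
  obtains k' l' where "k' < l'" "l' < n" "k' \<notin> {k, l}" "l' \<notin> {k, l}"
proof -
  have "card {k, l} \<le> 2"
    by (simp add: card_insert_if)
  then have "card ({..<n} - {k, l}) \<ge> 2"
    using assms diff_card_le_card_Diff[of "{k, l}" "{..<n}"] by simp
  then obtain T where "T \<subseteq> {..<n} - {k, l}" "card T = 2"
    by (meson obtain_subset_with_card_n)
  then obtain u v where "u \<noteq> v" "{u, v} \<subseteq> {..<n} - {k, l}"
    by (auto simp: card_2_iff)
  then show thesis
    by (intro that[of "min u v" "max u v"]) (auto simp: min_def max_def)
qed

text \<open>For \<open>n > |G|\<close> every argument vector lies on some diagonal, and for \<open>n \<ge> 4\<close> every pair
  \<open>k, l\<close> is disjoint from some other pair, which pins down \<open>g\<close> at the vectors \<open>e\<^sub>k + e\<^sub>l\<close>.\<close>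

lemma affine_if_minors_affine:
  fixes g :: "'a::{finite, field} list \<Rightarrow> 'a"
  assumes "4 \<le> n" "card (UNIV :: 'a set) < n"
    and minors: "\<And>i j. i < j \<Longrightarrow> j < n \<Longrightarrow> affine_fun (n - 1) (id_minor g i j)"
    and x: "length x = n"
  shows "g x = (\<Sum>t<n. (g (indicator_list n {t}) - g (replicate n 0)) * x ! t) + g (replicate n 0)"
proof -
  define g0 where "g0 = g (replicate n 0)"
  define b where "b t = g (indicator_list n {t}) - g0" for t
  have pair_value: "g (indicator_list n {k, l}) = b k + b l + g0" if "k < l" "l < n" for k l
  proof -
    obtain k' l' where kl': "k' < l'" "l' < n" "k' \<notin> {k, l}" "l' \<notin> {k, l}"
      using obtain_pair_avoiding[OF assms(1)] .
    let ?e = "indicator_list n {k, l} :: 'a list"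
    have "g ?e = (\<Sum>t\<in>{..<n} - {k', l'}. b t * ?e ! t) + g0"
      using diagonal_form[OF minors[OF kl'(1,2)] kl'(1,2), of ?e] kl' unfolding b_def g0_def by simp
    also have "(\<Sum>t\<in>{..<n} - {k', l'}. b t * ?e ! t) = sum b (({..<n} - {k', l'}) \<inter> {k, l})"
      by (simp add: sum.inter_restrict)
    also have "({..<n} - {k', l'}) \<inter> {k, l} = {k, l}"
      using that kl' by auto
    finally show ?thesis
      using that by simp
  qed
  obtain k l where kl: "k < l" "l < n" "x ! k = x ! l"
    using nth_eq_if_card_less_length[of x] assms(2) x by auto
  have "g x = (\<Sum>t\<in>{..<n} - {k, l}. b t * x ! t) + (b k + b l) * x ! k + g0"
    using diagonal_form[OF minors[OF kl(1,2)] kl(1,2) x kl(3)] pair_value[OF kl(1,2)]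
    unfolding b_def g0_def by simp
  also have "\<dots> = (\<Sum>t<n. b t * x ! t) + g0"
    using sum_split_pair[of k l n "\<lambda>t. b t * x ! t"] kl by (simp add: distrib_right)
  finally show ?thesis
    unfolding b_def g0_def .
qed

section \<open>Coefficient multisets\<close>

text \<open>For an affine function this is the multiset of its coefficients.\<close>

definition coeff_mset :: "nat \<Rightarrow> ('a::ring_1 list \<Rightarrow> 'a) \<Rightarrow> 'a multiset" where
  "coeff_mset N h = image_mset (\<lambda>m. h (indicator_list N {m}) - h (replicate N 0)) (mset_set {..<N})"

lemma coeff_mset_reindexed:
  fixes h :: "'a::ring_1 list \<Rightarrow> 'a" and b :: "nat \<Rightarrow> 'a" and r :: "nat \<Rightarrow> nat"
  assumes "\<And>ys. length ys = N \<Longrightarrow> h ys = (\<Sum>k<n. b k * ys ! r k) + c"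
    and "\<And>k. k < n \<Longrightarrow> r k < N"
  shows "coeff_mset N h = image_mset (\<lambda>m. \<Sum>k | k < n \<and> r k = m. b k) (mset_set {..<N})"
  unfolding coeff_mset_def
proof (rule image_mset_cong)
  fix m
  have "h (indicator_list N {m}) - h (replicate N 0)
      = (\<Sum>k<n. b k * indicator_list N {m} ! r k - b k * replicate N 0 ! r k)"
    using assms(1) by (simp add: sum_subtractf)
  also have "\<dots> = (\<Sum>k<n. if r k = m then b k else 0)"
    using assms(2) by (intro sum.cong) auto
  also have "\<dots> = sum b ({..<n} \<inter> {k. r k = m})"
    by (subst sum.inter_restrict) auto
  also have "{..<n} \<inter> {k. r k = m} = {k. k < n \<and> r k = m}"
    by auto
  finally show "h (indicator_list N {m}) - h (replicate N 0) = (\<Sum>k | k < n \<and> r k = m. b k)" .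
qed

lemma coeff_mset_fun_equiv:
  assumes "fun_equiv N h h'"
  shows "coeff_mset N h = coeff_mset N h'"
proof -
  obtain \<sigma> where \<sigma>: "\<sigma> permutes {..<N}"
    and e: "\<And>xs. length xs = N \<Longrightarrow> h xs = h' (map (\<lambda>k. xs ! \<sigma> k) [0..<N])"
    using assms unfolding fun_equiv_def by blast
  have h_indicator: "h (indicator_list N S) = h' (indicator_list N (\<sigma> -` S))" for S
  proof -
    have "map (\<lambda>k. indicator_list N S ! \<sigma> k) [0..<N] = indicator_list N (\<sigma> -` S)"
      using permutes_in_image[OF \<sigma>] by (intro nth_equalityI) auto
    then show ?thesis
      using e[of "indicator_list N S"] by (metis length_indicator_list)
  qed
  have "\<sigma> -` {m} = {inv \<sigma> m}" for m
    using permutes_inverses[OF \<sigma>] by auto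
  then have h_unit: "h (indicator_list N {m}) = h' (indicator_list N {inv \<sigma> m})" for m
    by (simp add: h_indicator)
  define F where "F m = h' (indicator_list N {m}) - h' (replicate N 0)" for m
  have "coeff_mset N h = image_mset (F \<circ> inv \<sigma>) (mset_set {..<N})"
    unfolding coeff_mset_def F_def
    using h_indicator[of "{}"] by (simp add: h_unit indicator_list_empty comp_def)
  also have "\<dots> = image_mset F (image_mset (inv \<sigma>) (mset_set {..<N}))"
    by (simp add: multiset.map_comp)
  also have "image_mset (inv \<sigma>) (mset_set {..<N}) = mset_set {..<N}"
    by (rule permutes_image_mset[OF permutes_inv[OF \<sigma>]])
  finally show ?thesis
    unfolding coeff_mset_def F_def .
qed

lemma fun_equiv_if_coeff_msets_eq:
  fixes f g :: "'a::comm_semiring_1 list \<Rightarrow> 'a"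
  assumes g: "\<And>xs. length xs = n \<Longrightarrow> g xs = (\<Sum>k<n. b k * xs ! k) + c"
    and f: "\<And>xs. length xs = n \<Longrightarrow> f xs = (\<Sum>k<n. a k * xs ! k) + c"
    and "image_mset a (mset_set {..<n}) = image_mset b (mset_set {..<n})"
  shows "fun_equiv n g f"
proof -
  obtain p where p: "p permutes {..<n}" and ab: "\<forall>k\<in>{..<n}. a k = b (p k)"
    using image_mset_eq_implies_permutes[OF finite_lessThan assms(3)] by blast
  have "g xs = f (map (\<lambda>k. xs ! p k) [0..<n])" if "length xs = n" for xs
  proof -
    have "f (map (\<lambda>k. xs ! p k) [0..<n]) = (\<Sum>k<n. b (p k) * xs ! p k) + c"
      using ab by (simp add: f)
    also have "(\<Sum>k<n. b (p k) * xs ! p k) = (\<Sum>k<n. b k * xs ! k)"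
      using sum.permute[OF p, of "\<lambda>k. b k * xs ! k"] by (simp add: comp_def)
    finally show ?thesis
      using g[OF that] by simp
  qed
  with p show ?thesis
    unfolding fun_equiv_def by (intro exI[of _ p]) simp
qed

text \<open>The coefficients of the minor \<open>f\<^sub>I\<close>, \<open>I = {i, j}\<close>, of an affine \<open>f\<close> with coefficients \<open>b\<close>:
  the coefficients \<open>b i\<close> and \<open>b j\<close> merge into \<open>b i + b j\<close>.\<close>

definition minor_coeffs :: "nat \<Rightarrow> (nat \<Rightarrow> 'a::plus) \<Rightarrow> nat \<Rightarrow> nat \<Rightarrow> 'a multiset" where
  "minor_coeffs n b i j = add_mset (b i + b j) (image_mset b (mset_set ({..<n} - {i, j})))"

lemma image_mset_minor_index_fibres:
  assumes "i < j" "j < n"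
  shows "image_mset (\<lambda>m. \<Sum>k | k < n \<and> minor_index i j k = m. b k) (mset_set {..<n - 1})
    = minor_coeffs n b i j"
proof -
  define s where "s m = (if m < j then m else Suc m)" for m
  have fibre_i: "{k. k < n \<and> minor_index i j k = i} = {i, j}"
    using assms by (auto simp: minor_index_def)
  have fibre: "{k. k < n \<and> minor_index i j k = m} = {s m}" if "m < n - 1" "m \<noteq> i" for m
    using assms that by (auto simp: minor_index_def s_def)
  have "s ` ({..<n - 1} - {i}) = {..<n} - {i, j}"
  proof
    show "s ` ({..<n - 1} - {i}) \<subseteq> {..<n} - {i, j}"
      using assms by (auto simp: s_def)
    show "{..<n} - {i, j} \<subseteq> s ` ({..<n - 1} - {i})"
    proof
      fix t
      assume t: "t \<in> {..<n} - {i, j}"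
      show "t \<in> s ` ({..<n - 1} - {i})"
      proof (cases "t < j")
        case True
        then show ?thesis
          using t assms by (intro image_eqI[of _ _ t]) (auto simp: s_def)
      next
        case False
        then show ?thesis
          using t assms by (intro image_eqI[of _ _ "t - 1"]) (auto simp: s_def)
      qed
    qed
  qed
  moreover have "inj_on s ({..<n - 1} - {i})"
    by (auto simp: inj_on_def s_def split: if_splits)
  ultimately have "image_mset b (mset_set ({..<n} - {i, j}))
      = image_mset (b \<circ> s) (mset_set ({..<n - 1} - {i}))"
    by (simp add: image_mset_mset_set multiset.map_comp[symmetric])
  also have "\<dots> = image_mset (\<lambda>m. \<Sum>k | k < n \<and> minor_index i j k = m. b k) (mset_set ({..<n - 1} - {i}))"
    using fibre by (intro image_mset_cong) auto
  finally show ?thesis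
    using assms fibre_i by (simp add: minor_coeffs_def mset_set.remove[of _ i])
qed

lemma coeff_mset_id_minor:
  fixes h :: "'a::ring_1 list \<Rightarrow> 'a"
  assumes "\<And>xs. length xs = n \<Longrightarrow> h xs = (\<Sum>k<n. b k * xs ! k) + c" "i < j" "j < n"
  shows "coeff_mset (n - 1) (id_minor h i j) = minor_coeffs n b i j"
proof -
  have "coeff_mset (n - 1) (id_minor h i j)
      = image_mset (\<lambda>m. \<Sum>k | k < n \<and> minor_index i j k = m. b k) (mset_set {..<n - 1})"
    by (intro coeff_mset_reindexed[where c = c] id_minor_linear_form[OF assms(1)] minor_index_less)
      (use assms(2,3) in auto)
  also have "\<dots> = minor_coeffs n b i j"
    using assms(2,3) by (rule image_mset_minor_index_fibres)
  finally show ?thesis .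
qed

text \<open>Well defined on equivalence classes by \<open>coeff_mset_fun_equiv\<close>.\<close>

definition class_coeff_mset :: "nat \<Rightarrow> ('a::ring_1 list \<Rightarrow> 'a) set \<Rightarrow> 'a multiset" where
  "class_coeff_mset N E = coeff_mset N (SOME h. h \<in> E)"

lemma class_coeff_mset_equiv_class: "class_coeff_mset N (equiv_class N h) = coeff_mset N h"
proof -
  have "h \<in> equiv_class N h"
    by (simp add: equiv_class_def fun_equiv_refl)
  then have "(SOME h'. h' \<in> equiv_class N h) \<in> equiv_class N h"
    by (rule someI[of "\<lambda>h'. h' \<in> equiv_class N h"])
  then have "fun_equiv N (SOME h'. h' \<in> equiv_class N h) h"
    by (simp add: equiv_class_def)
  then show ?thesis
    unfolding class_coeff_mset_def by (rule coeff_mset_fun_equiv)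
qed

definition coeff_deck :: "nat \<Rightarrow> (nat \<Rightarrow> 'a::plus) \<Rightarrow> 'a multiset multiset" where
  "coeff_deck n b = image_mset (\<lambda>(i, j). minor_coeffs n b i j) (mset_set (increasing_pairs n))"

lemma image_class_coeff_mset_deck:
  fixes h :: "'a::ring_1 list \<Rightarrow> 'a"
  assumes "\<And>xs. length xs = n \<Longrightarrow> h xs = (\<Sum>k<n. b k * xs ! k) + c"
  shows "image_mset (class_coeff_mset (n - 1)) (deck n h) = coeff_deck n b"
  unfolding deck_def coeff_deck_def increasing_pairs_def multiset.map_comp
proof (rule image_mset_cong)
  fix p
  assume "p \<in># mset_set {(i, j). i < j \<and> j < n}"
  then obtain i j where p: "p = (i, j)" "i < j" "j < n"
    using finite_increasing_pairs[of n] by (auto simp: increasing_pairs_def)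
  have "class_coeff_mset (n - 1) (equiv_class (n - 1) (id_minor h i j)) = minor_coeffs n b i j"
    unfolding class_coeff_mset_equiv_class using assms p(2,3) by (rule coeff_mset_id_minor)
  then show "(class_coeff_mset (n - 1) \<circ> (\<lambda>(i, j). equiv_class (n - 1) (id_minor h i j))) p
      = (\<lambda>(i, j). minor_coeffs n b i j) p"
    by (simp add: p(1))
qed

section \<open>Recovering the coefficients from the coefficient deck\<close>

definition value_count :: "nat \<Rightarrow> (nat \<Rightarrow> 'a) \<Rightarrow> 'a \<Rightarrow> int" where
  "value_count n b v = (\<Sum>t<n. of_bool (b t = v))"

lemma value_count_nonneg: "0 \<le> value_count n b v"
  by (simp add: value_count_def sum_nonneg)

lemma int_count_image_mset_mset_set:
  "finite A \<Longrightarrow> int (count (image_mset b (mset_set A)) v) = (\<Sum>t\<in>A. of_bool (b t = v))"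
  by (induction A rule: finite_induct) auto

lemma value_count_eq_count: "value_count n b v = int (count (image_mset b (mset_set {..<n})) v)"
  by (simp add: value_count_def int_count_image_mset_mset_set)

lemma image_mset_eq_iff_value_count_eq:
  "image_mset a (mset_set {..<n}) = image_mset b (mset_set {..<n}) \<longleftrightarrow> value_count n a = value_count n b"
  by (simp add: multiset_eq_iff fun_eq_iff value_count_eq_count)

lemma sum_value_count:
  fixes b :: "nat \<Rightarrow> 'a::finite"
  shows "(\<Sum>u\<in>UNIV. value_count n b u) = int n"
  unfolding value_count_def by (subst sum.swap) (simp add: of_bool_def sum.delta)

lemma count_minor_coeffs:
  assumes "i < j" "j < n"
  shows "int (count (minor_coeffs n b i j) v)
    = value_count n b v - of_bool (b i = v) - of_bool (b j = v) + of_bool (b i + b j = v)"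
  using assms sum_split_pair[of i j n "\<lambda>t. of_bool (b t = v) :: int"]
  by (simp add: minor_coeffs_def int_count_image_mset_mset_set value_count_def)

lemma sum_increasing_pairs_symmetric:
  fixes F :: "nat \<Rightarrow> nat \<Rightarrow> 'a::comm_ring_1"
  assumes "\<And>i j. F i j = F j i"
  shows "2 * (\<Sum>(i, j)\<in>increasing_pairs n. F i j) = (\<Sum>i<n. \<Sum>j<n. F i j) - (\<Sum>i<n. F i i)"
proof -
  let ?P = "increasing_pairs n" and ?swap = "\<lambda>(i, j). (j, i)"
  have off_diagonal: "{..<n} \<times> {..<n} - (\<lambda>i. (i, i)) ` {..<n} = ?P \<union> ?swap ` ?P"
    by (auto simp: increasing_pairs_def image_iff)
  have "(\<Sum>(i, j)\<in>?swap ` ?P. F i j) = (\<Sum>(i, j)\<in>?P. F i j)"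
    by (subst sum.reindex; auto simp: inj_on_def assms case_prod_beta)
  then have "2 * (\<Sum>(i, j)\<in>?P. F i j) = (\<Sum>(i, j)\<in>?P \<union> ?swap ` ?P. F i j)"
    using finite_increasing_pairs[of n] by (subst sum.union_disjoint) (auto simp: increasing_pairs_def)
  also have "\<dots> = (\<Sum>(i, j)\<in>{..<n} \<times> {..<n}. F i j) - (\<Sum>(i, j)\<in>(\<lambda>i. (i, i)) ` {..<n}. F i j)"
    unfolding off_diagonal[symmetric] by (subst sum_diff) auto
  also have "(\<Sum>(i, j)\<in>(\<lambda>i. (i, i)) ` {..<n}. F i j) = (\<Sum>i<n. F i i)"
    by (simp add: sum.reindex inj_on_def)
  finally show ?thesis
    by (simp add: sum.cartesian_product)
qed

definition self_convolution :: "('a::{finite, ab_group_add} \<Rightarrow> int) \<Rightarrow> 'a \<Rightarrow> int" where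
  "self_convolution \<alpha> v = (\<Sum>u\<in>UNIV. \<alpha> u * \<alpha> (v - u))"

definition diagonal_count :: "('a::{finite, plus} \<Rightarrow> int) \<Rightarrow> 'a \<Rightarrow> int" where
  "diagonal_count \<alpha> v = (\<Sum>u\<in>UNIV. \<alpha> u * of_bool (u + u = v))"

lemma sum_UNIV_of_bool_eq_mult:
  fixes F :: "'a::finite \<Rightarrow> 'b::semiring_1"
  shows "(\<Sum>u\<in>UNIV. of_bool (c = u) * F u) = F c"
  by (simp add: sum.delta)

lemma self_convolution_value_count:
  fixes b :: "nat \<Rightarrow> 'a::{finite, ab_group_add}"
  shows "(\<Sum>i<n. \<Sum>j<n. of_bool (b i + b j = v)) = self_convolution (value_count n b) v"
proof -
  have "(\<Sum>i<n. \<Sum>j<n. of_bool (b i + b j = v)) = (\<Sum>i<n. value_count n b (v - b i))"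
    unfolding value_count_def by (intro sum.cong) (auto simp: eq_diff_eq add.commute)
  also have "\<dots> = (\<Sum>i<n. \<Sum>u\<in>UNIV. of_bool (b i = u) * value_count n b (v - u))"
    by (simp only: sum_UNIV_of_bool_eq_mult)
  also have "\<dots> = self_convolution (value_count n b) v"
    unfolding self_convolution_def value_count_def
    by (subst sum.swap) (simp add: sum_distrib_right)
  finally show ?thesis .
qed

lemma diagonal_count_value_count:
  fixes b :: "nat \<Rightarrow> 'a::{finite, plus}"
  shows "(\<Sum>i<n. of_bool (b i + b i = v)) = diagonal_count (value_count n b) v"
proof -
  have "(\<Sum>i<n. of_bool (b i + b i = v) :: int)
      = (\<Sum>i<n. \<Sum>u\<in>UNIV. of_bool (b i = u) * of_bool (u + u = v))"
    by (simp only: sum_UNIV_of_bool_eq_mult)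
  also have "\<dots> = diagonal_count (value_count n b) v"
    unfolding diagonal_count_def value_count_def
    by (subst sum.swap) (simp add: sum_distrib_right)
  finally show ?thesis .
qed

lemma two_sum_count_coeff_deck:
  fixes b :: "nat \<Rightarrow> 'a::{finite, ab_group_add}"
  shows "2 * (\<Sum>M\<in>#coeff_deck n b. int (count M v))
    = (int n - 1) * (int n - 2) * value_count n b v
      + self_convolution (value_count n b) v - diagonal_count (value_count n b) v"
proof -
  let ?\<alpha> = "value_count n b v"
  define c where "c i j = ?\<alpha> - of_bool (b i = v) - of_bool (b j = v) + of_bool (b i + b j = v)" for i j
  have "(\<Sum>M\<in>#coeff_deck n b. int (count M v))
      = (\<Sum>(i, j)\<in>increasing_pairs n. int (count (minor_coeffs n b i j) v))"
    unfolding coeff_deck_def sum_unfold_sum_mset multiset.map_comp by (simp add: comp_def split_def)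
  also have "\<dots> = (\<Sum>(i, j)\<in>increasing_pairs n. c i j)"
    by (intro sum.cong) (auto simp: increasing_pairs_def c_def count_minor_coeffs)
  finally have "2 * (\<Sum>M\<in>#coeff_deck n b. int (count M v)) = (\<Sum>i<n. \<Sum>j<n. c i j) - (\<Sum>i<n. c i i)"
    by (simp add: sum_increasing_pairs_symmetric c_def add.commute)
  also have "(\<Sum>i<n. \<Sum>j<n. c i j)
      = int n * int n * ?\<alpha> - 2 * int n * ?\<alpha> + self_convolution (value_count n b) v"
    by (simp add: c_def sum.distrib sum_subtractf value_count_def sum_distrib_left
        self_convolution_value_count[symmetric] algebra_simps)
  also have "(\<Sum>i<n. c i i) = int n * ?\<alpha> - 2 * ?\<alpha> + diagonal_count (value_count n b) v"
    by (simp add: c_def sum.distrib sum_subtractf value_count_def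
        diagonal_count_value_count[symmetric] algebra_simps)
  finally show ?thesis
    by (simp add: algebra_simps)
qed

lemma sum_convolution_UNIV:
  fixes f g :: "'a::{finite, ab_group_add} \<Rightarrow> 'b::comm_semiring_0"
  shows "(\<Sum>v\<in>UNIV. \<Sum>u\<in>UNIV. f u * g (v - u)) = sum f UNIV * sum g UNIV"
proof -
  have shift: "(\<Sum>v\<in>UNIV. g (v - u)) = sum g UNIV" for u
    by (rule sum.reindex_bij_witness[where i = "\<lambda>v. v + u" and j = "\<lambda>v. v - u"]) auto
  show ?thesis
    by (subst sum.swap) (simp add: sum_distrib_left[symmetric] shift sum_distrib_right)
qed

lemma abs_self_convolution_diff_le:
  fixes \<alpha> \<beta> :: "'a::{finite, ab_group_add} \<Rightarrow> int"
  assumes "\<And>u. 0 \<le> \<alpha> u" "\<And>u. 0 \<le> \<beta> u"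
  shows "\<bar>self_convolution \<alpha> v - self_convolution \<beta> v\<bar>
    \<le> (\<Sum>u\<in>UNIV. \<bar>\<alpha> u - \<beta> u\<bar> * \<alpha> (v - u)) + (\<Sum>u\<in>UNIV. \<beta> u * \<bar>\<alpha> (v - u) - \<beta> (v - u)\<bar>)"
proof -
  have "self_convolution \<alpha> v - self_convolution \<beta> v
      = (\<Sum>u\<in>UNIV. (\<alpha> u - \<beta> u) * \<alpha> (v - u) + \<beta> u * (\<alpha> (v - u) - \<beta> (v - u)))"
    unfolding self_convolution_def sum_subtractf[symmetric] by (intro sum.cong) (auto simp: algebra_simps)
  also have "\<bar>\<dots>\<bar> \<le> (\<Sum>u\<in>UNIV. \<bar>\<alpha> u - \<beta> u\<bar> * \<alpha> (v - u) + \<beta> u * \<bar>\<alpha> (v - u) - \<beta> (v - u)\<bar>)"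
  proof (intro order_trans[OF sum_abs] sum_mono)
    fix u
    have "\<bar>(\<alpha> u - \<beta> u) * \<alpha> (v - u)\<bar> = \<bar>\<alpha> u - \<beta> u\<bar> * \<alpha> (v - u)"
      "\<bar>\<beta> u * (\<alpha> (v - u) - \<beta> (v - u))\<bar> = \<beta> u * \<bar>\<alpha> (v - u) - \<beta> (v - u)\<bar>"
      using assms[of "v - u"] assms(2)[of u] by (simp_all add: abs_mult)
    then show "\<bar>(\<alpha> u - \<beta> u) * \<alpha> (v - u) + \<beta> u * (\<alpha> (v - u) - \<beta> (v - u))\<bar>
        \<le> \<bar>\<alpha> u - \<beta> u\<bar> * \<alpha> (v - u) + \<beta> u * \<bar>\<alpha> (v - u) - \<beta> (v - u)\<bar>"
      using abs_triangle_ineq by metis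
  qed
  finally show ?thesis
    by (simp add: sum.distrib)
qed

lemma abs_diagonal_count_diff_le:
  fixes \<alpha> \<beta> :: "'a::{finite, plus} \<Rightarrow> int"
  shows "\<bar>diagonal_count \<alpha> v - diagonal_count \<beta> v\<bar> \<le> (\<Sum>u\<in>UNIV. \<bar>\<alpha> u - \<beta> u\<bar> * of_bool (u + u = v))"
  unfolding diagonal_count_def sum_subtractf[symmetric]
  by (rule order_trans[OF sum_abs], rule sum_mono) (simp add: abs_mult flip: left_diff_distrib)

text \<open>An \<open>\<ell>\<^sub>1\<close> argument: the linear term \<open>K \<alpha>\<close> dominates the change of the quadratic terms.\<close>

lemma convolution_equation_unique:
  fixes \<alpha> \<beta> :: "'a::{finite, ab_group_add} \<Rightarrow> int"
  assumes nonneg: "\<And>u. 0 \<le> \<alpha> u" "\<And>u. 0 \<le> \<beta> u"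
    and sums: "sum \<alpha> UNIV = N" "sum \<beta> UNIV = N" and K: "2 * N + 1 < K"
    and eq: "\<And>v. K * \<alpha> v + self_convolution \<alpha> v - diagonal_count \<alpha> v
      = K * \<beta> v + self_convolution \<beta> v - diagonal_count \<beta> v"
  shows "\<alpha> = \<beta>"
proof -
  define \<delta> where "\<delta> u = \<bar>\<alpha> u - \<beta> u\<bar>" for u
  define S where "S = sum \<delta> UNIV"
  have "0 \<le> N"
    using sums(1) nonneg(1) by (metis sum_nonneg)
  with K have "0 < K"
    by simp
  have pointwise: "K * \<delta> v \<le> (\<Sum>u\<in>UNIV. \<delta> u * \<alpha> (v - u)) + (\<Sum>u\<in>UNIV. \<beta> u * \<delta> (v - u))
      + (\<Sum>u\<in>UNIV. \<delta> u * of_bool (u + u = v))" for v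
  proof -
    have "K * \<delta> v = \<bar>K * (\<alpha> v - \<beta> v)\<bar>"
      using \<open>0 < K\<close> by (simp add: \<delta>_def abs_mult)
    also have "\<dots> = \<bar>(diagonal_count \<alpha> v - diagonal_count \<beta> v) - (self_convolution \<alpha> v - self_convolution \<beta> v)\<bar>"
      using eq[of v] by (simp add: algebra_simps)
    also have "\<dots> \<le> \<bar>diagonal_count \<alpha> v - diagonal_count \<beta> v\<bar> + \<bar>self_convolution \<alpha> v - self_convolution \<beta> v\<bar>"
      by (rule abs_triangle_ineq4)
    finally show ?thesis
      using abs_diagonal_count_diff_le[where \<alpha> = \<alpha> and \<beta> = \<beta> and v = v] abs_self_convolution_diff_le[of \<alpha> \<beta> v, OF nonneg]
      unfolding \<delta>_def by linarith
  qed
  have "K * S \<le> (\<Sum>v\<in>UNIV. (\<Sum>u\<in>UNIV. \<delta> u * \<alpha> (v - u)) + (\<Sum>u\<in>UNIV. \<beta> u * \<delta> (v - u))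
      + (\<Sum>u\<in>UNIV. \<delta> u * of_bool (u + u = v)))"
    unfolding S_def sum_distrib_left by (rule sum_mono) (rule pointwise)
  also have "\<dots> = S * N + N * S + S"
  proof -
    have "(\<Sum>v\<in>UNIV. \<Sum>u\<in>UNIV. \<delta> u * of_bool (u + u = v)) = (\<Sum>u\<in>UNIV. \<delta> u)"
      by (subst sum.swap) (simp add: sum_distrib_left[symmetric] sum.delta)
    then show ?thesis
      unfolding sum.distrib sum_convolution_UNIV S_def sums by simp
  qed
  finally have "(K - (2 * N + 1)) * S \<le> 0"
    by (simp add: algebra_simps)
  then have "S = 0"
    using K by (simp add: S_def \<delta>_def mult_le_0_iff sum_nonneg order.antisym)
  then show ?thesis
    by (auto simp: S_def \<delta>_def sum_nonneg_eq_0_iff)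
qed

lemma card_UNIV_ge_2: "2 \<le> card (UNIV :: 'a::{finite, zero_neq_one} set)"
  using card_mono[of UNIV "{0, 1 :: 'a}"] by simp

lemma card_UNIV_eq_2_field:
  assumes "card (UNIV :: 'a::{finite, field} set) = 2"
  shows "UNIV = {0, 1 :: 'a}" "1 + 1 = (0 :: 'a)"
proof -
  show U: "UNIV = {0, 1 :: 'a}"
    using assms by (intro card_subset_eq[symmetric]) auto
  have "(1 :: 'a) + 1 \<in> {0, 1}"
    by (simp only: U[symmetric]) simp
  moreover have "(1 :: 'a) + 1 \<noteq> 1"
    by (metis add_cancel_right_right zero_neq_one)
  ultimately show "1 + 1 = (0 :: 'a)"
    by blast
qed

lemma card_UNIV_eq_3_field:
  assumes "card (UNIV :: 'a::{finite, field} set) = 3"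
  shows "UNIV = {0, 1, 2 :: 'a}" "(2 :: 'a) \<noteq> 0" "(2 :: 'a) \<noteq> 1" "(4 :: 'a) = 1" "-1 = (2 :: 'a)" "-2 = (1 :: 'a)"
proof -
  have "card (UNIV - {0, 1 :: 'a}) = 1"
    using assms by (simp add: card_Diff_subset)
  then obtain c :: 'a where "UNIV - {0, 1} = {c}"
    by (rule card_1_singletonE)
  then have U: "UNIV = {0, 1, c}" and "c \<noteq> 0" "c \<noteq> 1"
    by auto
  have "x \<in> {0, 1, c}" for x :: 'a
    by (simp only: U[symmetric]) simp
  note in_U = this
  have two_ne_1: "(2 :: 'a) \<noteq> 1"
    by (metis add_cancel_right_right one_add_one zero_neq_one)
  have two_ne_0: "(2 :: 'a) \<noteq> 0"
  proof
    assume "(2 :: 'a) = 0"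
    then have "-1 = (1 :: 'a)"
      by (metis eq_neg_iff_add_eq_0 one_add_one)
    moreover have "c + 1 \<noteq> 0"
    proof
      assume "c + 1 = 0"
      then have "c = -1"
        by (simp add: eq_neg_iff_add_eq_0)
      then show False
        using \<open>-1 = 1\<close> \<open>c \<noteq> 1\<close> by simp
    qed
    ultimately show False
      using in_U[of "c + 1"] \<open>c \<noteq> 0\<close> by auto
  qed
  have c: "c = 2"
    using in_U[of 2] two_ne_0 two_ne_1 by auto
  have "(2 :: 'a) + 1 \<noteq> 1"
    using two_ne_0 add_cancel_left_left[of "2 :: 'a" 1] by blast
  moreover have "(2 :: 'a) + 1 \<noteq> 2"
    using add_cancel_right_right[of "2 :: 'a" 1] by (metis zero_neq_one)
  ultimately have three: "(2 :: 'a) + 1 = 0"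
    using in_U[of "2 + 1"] c by blast
  show "UNIV = {0, 1, 2 :: 'a}"
    using U c by simp
  show "(2 :: 'a) \<noteq> 0" "(2 :: 'a) \<noteq> 1"
    by (fact two_ne_0, fact two_ne_1)
  have "(3 :: 'a) = 0"
    using three by simp
  moreover have "(4 :: 'a) = 3 + 1"
    by simp
  ultimately show "(4 :: 'a) = 1"
    by simp
  show "-1 = (2 :: 'a)" "-2 = (1 :: 'a)"
    using three by (simp_all add: eq_neg_iff_add_eq_0 add.commute)
qed

text \<open>The equations of \<open>convolution_equation_unique_card3\<close> at \<open>v = 0, 1, 2\<close>, written for the
  numbers \<open>z, p, m\<close> of coefficients equal to \<open>0, 1, 2\<close>.\<close>

lemma gf3_count_system_unique:
  fixes z p m z' p' m' :: int
  assumes "0 \<le> z" "0 \<le> p" "0 \<le> m" "0 \<le> z'" "0 \<le> p'" "0 \<le> m'"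
    and "z + p + m = 4" "z' + p' + m' = 4"
    and "5 * z + z * z + 2 * p * m = 5 * z' + z' * z' + 2 * p' * m'"
    and "6 * p + 2 * z * p + m * m - m = 6 * p' + 2 * z' * p' + m' * m' - m'"
    and "6 * m + 2 * z * m + p * p - p = 6 * m' + 2 * z' * m' + p' * p' - p'"
  shows "z = z' \<and> p = p' \<and> m = m'"
proof -
  have m: "m = 4 - z - p" "m' = 4 - z' - p'"
    using assms(7,8) by simp_all
  have "z = 0 \<or> z = 1 \<or> z = 2 \<or> z = 3 \<or> z = 4" "p = 0 \<or> p = 1 \<or> p = 2 \<or> p = 3 \<or> p = 4"
    "z' = 0 \<or> z' = 1 \<or> z' = 2 \<or> z' = 3 \<or> z' = 4" "p' = 0 \<or> p' = 1 \<or> p' = 2 \<or> p' = 3 \<or> p' = 4"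
    using assms(1-8) by arith+
  then show ?thesis
    using assms(3,6,9-11) unfolding m by (elim disjE; simp)
qed

lemma convolution_equation_unique_card3:
  fixes \<alpha> \<beta> :: "'a::{finite, field} \<Rightarrow> int"
  assumes card: "card (UNIV :: 'a set) = 3"
    and nonneg: "\<And>u. 0 \<le> \<alpha> u" "\<And>u. 0 \<le> \<beta> u"
    and sums: "sum \<alpha> UNIV = 4" "sum \<beta> UNIV = 4"
    and eq: "\<And>v. 6 * \<alpha> v + self_convolution \<alpha> v - diagonal_count \<alpha> v
      = 6 * \<beta> v + self_convolution \<beta> v - diagonal_count \<beta> v"
  shows "\<alpha> = \<beta>"
proof -
  note F = card_UNIV_eq_3_field[OF card]
  have sum_UNIV: "sum f UNIV = f 0 + f 1 + f 2" for f :: "'a \<Rightarrow> int"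
    using F(2,3) by (simp add: F(1) add.assoc)
  have e0: "5 * \<alpha> 0 + \<alpha> 0 * \<alpha> 0 + 2 * \<alpha> 1 * \<alpha> 2 = 5 * \<beta> 0 + \<beta> 0 * \<beta> 0 + 2 * \<beta> 1 * \<beta> 2"
    using eq[of 0] F(2,3) by (simp add: self_convolution_def diagonal_count_def sum_UNIV F(4-6) algebra_simps)
  have e1: "6 * \<alpha> 1 + 2 * \<alpha> 0 * \<alpha> 1 + \<alpha> 2 * \<alpha> 2 - \<alpha> 2 = 6 * \<beta> 1 + 2 * \<beta> 0 * \<beta> 1 + \<beta> 2 * \<beta> 2 - \<beta> 2"
    using eq[of 1] F(2,3) by (simp add: self_convolution_def diagonal_count_def sum_UNIV F(4-6) algebra_simps)
  have e2: "6 * \<alpha> 2 + 2 * \<alpha> 0 * \<alpha> 2 + \<alpha> 1 * \<alpha> 1 - \<alpha> 1 = 6 * \<beta> 2 + 2 * \<beta> 0 * \<beta> 2 + \<beta> 1 * \<beta> 1 - \<beta> 1"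
    using eq[of 2] F(2,3) by (simp add: self_convolution_def diagonal_count_def sum_UNIV F(4-6) algebra_simps)
  have "\<alpha> 0 = \<beta> 0 \<and> \<alpha> 1 = \<beta> 1 \<and> \<alpha> 2 = \<beta> 2"
    using nonneg sums e0 e1 e2 by (intro gf3_count_system_unique) (simp_all add: sum_UNIV)
  moreover have "x \<in> {0, 1, 2}" for x :: 'a
    by (simp only: F(1)[symmetric]) simp
  ultimately show ?thesis
    by (intro ext) (metis insertE singletonD)
qed

lemma convolution_equation_card2:
  fixes \<alpha> \<beta> :: "'a::{finite, field} \<Rightarrow> int"
  assumes card: "card (UNIV :: 'a set) = 2"
    and nonneg: "\<And>u. 0 \<le> \<alpha> u" "\<And>u. 0 \<le> \<beta> u"
    and sums: "sum \<alpha> UNIV = 4" "sum \<beta> UNIV = 4"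
    and eq: "\<And>v. 6 * \<alpha> v + self_convolution \<alpha> v - diagonal_count \<alpha> v
      = 6 * \<beta> v + self_convolution \<beta> v - diagonal_count \<beta> v"
  shows "\<alpha> = \<beta> \<or> {\<alpha> 0, \<beta> 0} = {0, 1}"
proof -
  note F = card_UNIV_eq_2_field[OF card]
  have sum_UNIV: "sum f UNIV = f 0 + f 1" for f :: "'a \<Rightarrow> int"
    by (simp add: F(1))
  have "(2 :: 'a) = 0"
    using F(2) by simp
  then have "6 * \<alpha> 1 + 2 * \<alpha> 0 * \<alpha> 1 = 6 * \<beta> 1 + 2 * \<beta> 0 * \<beta> 1"
    using eq[of 1] by (simp add: self_convolution_def diagonal_count_def sum_UNIV algebra_simps)
  moreover have "\<alpha> 1 = 4 - \<alpha> 0" "\<beta> 1 = 4 - \<beta> 0"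
    using sums by (simp_all add: sum_UNIV)
  moreover have "\<alpha> 0 = 0 \<or> \<alpha> 0 = 1 \<or> \<alpha> 0 = 2 \<or> \<alpha> 0 = 3 \<or> \<alpha> 0 = 4"
    "\<beta> 0 = 0 \<or> \<beta> 0 = 1 \<or> \<beta> 0 = 2 \<or> \<beta> 0 = 3 \<or> \<beta> 0 = 4"
    using nonneg[of 0] nonneg[of 1] sums by (simp_all add: sum_UNIV) arith+
  ultimately have "\<alpha> 0 = \<beta> 0 \<or> {\<alpha> 0, \<beta> 0} = {0, 1}"
    by (elim disjE) (simp_all add: insert_commute)
  moreover have "x \<in> {0, 1}" for x :: 'a
    by (simp only: F(1)[symmetric]) simp
  ultimately show ?thesis
    using \<open>\<alpha> 1 = 4 - \<alpha> 0\<close> \<open>\<beta> 1 = 4 - \<beta> 0\<close> by (metis ext insertE singletonD)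
qed

text \<open>The one ambiguity left by \<open>convolution_equation_card2\<close> is resolved by looking at
  single cards: all cards of an all-ones coefficient vector contain a zero, but not all cards
  of a coefficient vector with exactly one zero do.\<close>

lemma coeff_deck_ne_card2:
  fixes a b :: "nat \<Rightarrow> 'a::{finite, field}"
  assumes card: "card (UNIV :: 'a set) = 2" and "2 \<le> n"
    and a0: "value_count n a 0 = 1" and b0: "value_count n b 0 = 0"
  shows "coeff_deck n a \<noteq> coeff_deck n b"
proof
  assume deck_eq: "coeff_deck n a = coeff_deck n b"
  note F = card_UNIV_eq_2_field[OF card]
  have "b t \<noteq> 0" if "t < n" for t
    using b0 that by (auto simp: value_count_def sum_nonneg_eq_0_iff)
  moreover have "b t \<in> {0, 1}" for t
    by (simp only: F(1)[symmetric]) simp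
  ultimately have b1: "b t = 1" if "t < n" for t
    using that by auto
  have "\<exists>t<n. a t = 0"
  proof (rule ccontr)
    assume "\<not> (\<exists>t<n. a t = 0)"
    then have "value_count n a 0 = 0"
      by (simp add: value_count_def)
    with a0 show False
      by simp
  qed
  then obtain t0 where t0: "t0 < n" "a t0 = 0"
    by blast
  define j0 where "j0 = (if t0 = 0 then 1 else 0 :: nat)"
  have j0: "j0 < n" "j0 \<noteq> t0"
    using \<open>2 \<le> n\<close> by (auto simp: j0_def)
  define i j where "i = min t0 j0" and "j = max t0 j0"
  have ij: "i < j" "j < n" "{i, j} = {t0, j0}"
    using j0 t0 by (auto simp: i_def j_def min_def max_def)
  have "count (minor_coeffs n a i j) 0 = 0"
    using count_minor_coeffs[OF ij(1,2), of a 0] a0 t0 ij(3) by (auto simp: doubleton_eq_iff)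
  moreover have "minor_coeffs n a i j \<in># coeff_deck n a"
    unfolding coeff_deck_def using ij finite_increasing_pairs[of n]
    by (auto simp: increasing_pairs_def intro!: image_eqI[where x = "(i, j)"])
  then have "minor_coeffs n a i j \<in># coeff_deck n b"
    by (simp only: deck_eq)
  moreover have "count M 0 = 1" if M: "M \<in># coeff_deck n b" for M
  proof -
    obtain k l where "k < l" "l < n" "M = minor_coeffs n b k l"
      using M finite_increasing_pairs[of n] unfolding coeff_deck_def by (auto simp: increasing_pairs_def)
    then show ?thesis
      using count_minor_coeffs[of k l n b 0] b0 b1 F(2) by simp
  qed
  ultimately show False
    by simp
qed

lemma coeff_deck_eq_imp_convolution_equation:
  fixes a b :: "nat \<Rightarrow> 'a::{finite, ab_group_add}"
  assumes "coeff_deck n a = coeff_deck n b"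
  shows "(int n - 1) * (int n - 2) * value_count n a v
      + self_convolution (value_count n a) v - diagonal_count (value_count n a) v
    = (int n - 1) * (int n - 2) * value_count n b v
      + self_convolution (value_count n b) v - diagonal_count (value_count n b) v"
  using two_sum_count_coeff_deck[where n = n and b = a and v = v]
    two_sum_count_coeff_deck[where n = n and b = b and v = v] assms by simp

lemma coeff_deck_determines_coeffs:
  fixes a b :: "nat \<Rightarrow> 'a::{finite, field}"
  assumes "4 \<le> n" "card (UNIV :: 'a set) < n" and deck_eq: "coeff_deck n a = coeff_deck n b"
  shows "image_mset a (mset_set {..<n}) = image_mset b (mset_set {..<n})"
  unfolding image_mset_eq_iff_value_count_eq
proof -
  let ?K = "(int n - 1) * (int n - 2)"
  note eq = coeff_deck_eq_imp_convolution_equation[OF deck_eq]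
  note conditions = value_count_nonneg value_count_nonneg sum_value_count sum_value_count
  show "value_count n a = value_count n b"
  proof (cases "n = 4")
    case False
    then have "5 \<le> n"
      using assms(1) by simp
    then have "2 * int n + 1 < 4 * (int n - 2)"
      by simp
    also have "\<dots> \<le> ?K"
      using \<open>5 \<le> n\<close> by (intro mult_right_mono) simp_all
    finally have "2 * int n + 1 < ?K" .
    then show ?thesis
      using eq by (intro convolution_equation_unique[OF conditions])
  next
    case True
    then have card: "card (UNIV :: 'a set) = 2 \<or> card (UNIV :: 'a set) = 3"
      using card_UNIV_ge_2[where 'a = 'a] assms(2) by linarith
    have "sum (value_count n a) UNIV = 4" "sum (value_count n b) UNIV = 4"
      using True by (simp_all add: sum_value_count)
    note conditions = value_count_nonneg value_count_nonneg this
    from card show ?thesis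
    proof
      assume "card (UNIV :: 'a set) = 3"
      then show ?thesis
        using eq True by (intro convolution_equation_unique_card3[OF _ conditions]) simp_all
    next
      assume card2: "card (UNIV :: 'a set) = 2"
      have "value_count n a = value_count n b \<or> {value_count n a 0, value_count n b 0} = {0, 1}"
        using eq True by (intro convolution_equation_card2[OF card2 conditions]) simp_all
      then show ?thesis
        using coeff_deck_ne_card2[OF card2, where n = n and a = a and b = b]
          coeff_deck_ne_card2[OF card2, where n = n and a = b and b = a]
          deck_eq True by (auto simp: doubleton_eq_iff)
    qed
  qed
qed

theorem mainTheorem14:
  fixes f g :: "'a::{finite, field} list \<Rightarrow> 'a" and n :: nat
  assumes "n \<ge> max (card (UNIV :: 'a set)) 3 + 1"
    and "affine_fun n f"
    and "deck n g = deck n f"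
  shows "fun_equiv n g f"
proof -
  have n: "4 \<le> n" "card (UNIV :: 'a set) < n"
    using assms(1) by auto
  obtain a c where f: "\<And>xs. length xs = n \<Longrightarrow> f xs = (\<Sum>k<n. a k * xs ! k) + c"
    using assms(2) unfolding affine_fun_def by blast
  have "g (replicate n 0) = c"
    using deck_eq_imp_replicate_eq[OF assms(3)] f n(1) by simp
  define b where "b t = g (indicator_list n {t}) - c" for t
  have g: "g xs = (\<Sum>k<n. b k * xs ! k) + c" if "length xs = n" for xs
    using affine_if_minors_affine[OF n deck_eq_imp_affine_minors[OF assms(2,3)] that]
      \<open>g (replicate n 0) = c\<close> by (simp add: b_def)
  have "coeff_deck n a = coeff_deck n b"
    using image_class_coeff_mset_deck[OF f] image_class_coeff_mset_deck[OF g] assms(3) by simp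
  then have "image_mset a (mset_set {..<n}) = image_mset b (mset_set {..<n})"
    by (rule coeff_deck_determines_coeffs[OF n])
  then show ?thesis
    by (intro fun_equiv_if_coeff_msets_eq[where a = a and b = b and c = c] g f)
qed

end
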